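(* Let $G$ be a $6$-regular graph, $\mathcal S$ a canonical path partition of $G$, and $P$ a path component with end-vertices $o_1,o_2$. Let $x_1,x_2\in V_2$ be path neighbors on $P$, with $x_1$ immediately preceding $x_2$ when $P$ is traversed from $o_1$ to $o_2$, and suppose $x_1$ goes to $o_1$ and $x_2$ goes to $o_2$. Then no vertex of $P$ lying strictly between $o_1$ and $x_1$, and no vertex of $P$ lying strictly between $x_2$ and $o_2$, is heavy.
   Context: All graphs are finite, simple and undirected. A path partition of $G=(V,E)$ is a set of vertex-disjoint paths (single vertices allowed) covering $V$; its members are components. A component with $t\ge3$ vertices is a cycle component if the subgraph induced on its vertex set has a spanning cycle; a one-vertex component is an isolated vertex; every other component is a path component. A path partition is canonical if (1) it has the minimum number of components among all path partitions of $G$; (2) among those, it has the maximum number of cycle components; (3) it has no isolated vertices. Given a canonical path partition $\mathcal S$ of $G$: two vertices are path neighbors if they are consecutive on a path component. An edge of $G$ is a free edge unless it joins two path neighbors or has both endpoints in the same cycle component. $V_1$ is the set of end-vertices of path components together with all vertices of cycle components. $V_2$ is the set of vertices not in $V_1$ that are joined by a free edge to a vertex of $V_1$. A balanced edge is a free edge with one endpoint in $V_1$ and the other in $V_2$; for $x\in V_2$, $y\in V_1$ we say $x$ goes to $y$ if $xy$ is a balanced edge. A vertex of $V_2$ is heavy if it is incident to at least three balanced edges whose other endpoints are end-vertices of path components. *)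

theory Defs
  imports Main
begin

definition simple_graph :: "'a set \<Rightarrow> ('a \<Rightarrow> 'a \<Rightarrow> bool) \<Rightarrow> bool" where
  "simple_graph V E \<longleftrightarrow> finite V \<and> (\<forall>u v. E u v \<longrightarrow> E v u) \<and> (\<forall>u. \<not> E u u)
     \<and> (\<forall>u v. E u v \<longrightarrow> u \<in> V \<and> v \<in> V)"

definition regular :: "nat \<Rightarrow> 'a set \<Rightarrow> ('a \<Rightarrow> 'a \<Rightarrow> bool) \<Rightarrow> bool" where
  "regular d V E \<longleftrightarrow> (\<forall>v\<in>V. card {u\<in>V. E v u} = d)"

definition gpath :: "('a \<Rightarrow> 'a \<Rightarrow> bool) \<Rightarrow> 'a list \<Rightarrow> bool" where
  "gpath E xs \<longleftrightarrow> xs \<noteq> [] \<and> distinct xs \<and> (\<forall>i. Suc i < length xs \<longrightarrow> E (xs ! i) (xs ! Suc i))"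

text \<open>A path partition: a finite set of vertex-disjoint paths covering V.
  (Each component is stored as one of its two orientations; disjointness forbids storing both.)\<close>
definition path_partition :: "'a set \<Rightarrow> ('a \<Rightarrow> 'a \<Rightarrow> bool) \<Rightarrow> 'a list set \<Rightarrow> bool" where
  "path_partition V E S \<longleftrightarrow> finite S \<and> (\<forall>p\<in>S. gpath E p)
     \<and> (\<forall>p\<in>S. \<forall>q\<in>S. p \<noteq> q \<longrightarrow> set p \<inter> set q = {})
     \<and> \<Union>(set ` S) = V"

definition has_spanning_cycle :: "('a \<Rightarrow> 'a \<Rightarrow> bool) \<Rightarrow> 'a set \<Rightarrow> bool" where
  "has_spanning_cycle E A \<longleftrightarrow> (\<exists>c. distinct c \<and> set c = A \<and> 3 \<le> length c
     \<and> (\<forall>i. Suc i < length c \<longrightarrow> E (c ! i) (c ! Suc i)) \<and> E (last c) (hd c))"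

definition cycle_comp :: "('a \<Rightarrow> 'a \<Rightarrow> bool) \<Rightarrow> 'a list \<Rightarrow> bool" where
  "cycle_comp E p \<longleftrightarrow> 3 \<le> length p \<and> has_spanning_cycle E (set p)"

definition path_comp :: "('a \<Rightarrow> 'a \<Rightarrow> bool) \<Rightarrow> 'a list \<Rightarrow> bool" where
  "path_comp E p \<longleftrightarrow> 2 \<le> length p \<and> \<not> cycle_comp E p"

definition canonical :: "'a set \<Rightarrow> ('a \<Rightarrow> 'a \<Rightarrow> bool) \<Rightarrow> 'a list set \<Rightarrow> bool" where
  "canonical V E S \<longleftrightarrow> path_partition V E S
     \<and> (\<forall>S'. path_partition V E S' \<longrightarrow> card S \<le> card S')
     \<and> (\<forall>S'. path_partition V E S' \<and> card S' = card S \<longrightarrow>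
           card {p\<in>S'. cycle_comp E p} \<le> card {p\<in>S. cycle_comp E p})
     \<and> (\<forall>p\<in>S. 2 \<le> length p)"

definition path_nbrs :: "('a \<Rightarrow> 'a \<Rightarrow> bool) \<Rightarrow> 'a list set \<Rightarrow> 'a \<Rightarrow> 'a \<Rightarrow> bool" where
  "path_nbrs E S u v \<longleftrightarrow> (\<exists>p\<in>S. path_comp E p \<and> (\<exists>i. Suc i < length p \<and>
     ((p ! i = u \<and> p ! Suc i = v) \<or> (p ! i = v \<and> p ! Suc i = u))))"

definition free_edge :: "('a \<Rightarrow> 'a \<Rightarrow> bool) \<Rightarrow> 'a list set \<Rightarrow> 'a \<Rightarrow> 'a \<Rightarrow> bool" where
  "free_edge E S u v \<longleftrightarrow> E u v \<and> \<not> path_nbrs E S u v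
     \<and> \<not> (\<exists>p\<in>S. cycle_comp E p \<and> u \<in> set p \<and> v \<in> set p)"

definition path_ends :: "('a \<Rightarrow> 'a \<Rightarrow> bool) \<Rightarrow> 'a list set \<Rightarrow> 'a set" where
  "path_ends E S = {hd p | p. p \<in> S \<and> path_comp E p} \<union> {last p | p. p \<in> S \<and> path_comp E p}"

definition V1 :: "('a \<Rightarrow> 'a \<Rightarrow> bool) \<Rightarrow> 'a list set \<Rightarrow> 'a set" where
  "V1 E S = path_ends E S \<union> \<Union>{set p | p. p \<in> S \<and> cycle_comp E p}"

definition V2 :: "'a set \<Rightarrow> ('a \<Rightarrow> 'a \<Rightarrow> bool) \<Rightarrow> 'a list set \<Rightarrow> 'a set" where
  "V2 V E S = {x \<in> V. x \<notin> V1 E S \<and> (\<exists>y\<in>V1 E S. free_edge E S x y)}"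

definition goes_to :: "'a set \<Rightarrow> ('a \<Rightarrow> 'a \<Rightarrow> bool) \<Rightarrow> 'a list set \<Rightarrow> 'a \<Rightarrow> 'a \<Rightarrow> bool" where
  "goes_to V E S x y \<longleftrightarrow> x \<in> V2 V E S \<and> y \<in> V1 E S \<and> free_edge E S x y"

definition heavy :: "'a set \<Rightarrow> ('a \<Rightarrow> 'a \<Rightarrow> bool) \<Rightarrow> 'a list set \<Rightarrow> 'a \<Rightarrow> bool" where
  "heavy V E S x \<longleftrightarrow> x \<in> V2 V E S \<and> 3 \<le> card {y. goes_to V E S x y \<and> y \<in> path_ends E S}"

end

theory Submission
  imports Defs
begin

text \<open>Write \<open>P = o\<^sub>1 \<dots> x\<^sub>1 x\<^sub>2 \<dots> o\<^sub>2\<close> and suppose a vertex \<open>v\<close> strictly between \<open>o\<^sub>1\<close> and \<open>x\<^sub>1\<close> is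
  heavy. At most two of its balanced edges to path ends go to \<open>o\<^sub>1, o\<^sub>2\<close>, so \<open>v\<close> is joined to an end
  \<open>e\<close> of another path component \<open>R\<close>. Using the edges \<open>x\<^sub>1o\<^sub>1\<close> and \<open>ve\<close>, the vertices of
  \<open>o\<^sub>1 \<dots> x\<^sub>1\<close> and \<open>R\<close> form a single path that runs from the successor of \<open>v\<close> to \<open>x\<^sub>1\<close>,
  jumps to \<open>o\<^sub>1\<close>, runs to \<open>v\<close>, jumps to \<open>e\<close> and traverses \<open>R\<close>, while the edge \<open>x\<^sub>2o\<^sub>2\<close> closes
  \<open>x\<^sub>2 \<dots> o\<^sub>2\<close> into a cycle (it has at least three vertices because \<open>x\<^sub>2o\<^sub>2\<close> is free). Replacing \<open>P\<close> and
  \<open>R\<close> by these two components keeps the number of components and creates a cycle component,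
  contradicting canonicity. The other side is the same argument for the reversed path.\<close>

lemma gpath_iff_successively:
  "gpath E xs \<longleftrightarrow> xs \<noteq> [] \<and> distinct xs \<and> successively E xs"
  unfolding gpath_def successively_conv_nth by blast

lemma gpath_rev:
  assumes "\<forall>u v. E u v \<longrightarrow> E v u" and "gpath E xs"
  shows "gpath E (rev xs)"
  using assms unfolding gpath_iff_successively by (auto intro: successively_mono)

lemma successively_take: "successively P xs \<Longrightarrow> successively P (take k xs)"
  using successively_append_iff[of P "take k xs" "drop k xs"] by simp

lemma successively_drop: "successively P xs \<Longrightarrow> successively P (drop k xs)"
  using successively_append_iff[of P "take k xs" "drop k xs"] by simp

lemma cycle_compI:
  assumes "gpath E p" and "3 \<le> length p" and "E (last p) (hd p)"
  shows "cycle_comp E p"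
  using assms unfolding cycle_comp_def has_spanning_cycle_def gpath_def by blast

lemma path_nbrs_consecutive:
  assumes "P \<in> S" and "path_comp E P" and "Q = P \<or> Q = rev P" and "Suc k < length Q"
  shows "path_nbrs E S (Q ! k) (Q ! Suc k)"
  using assms(3)
proof
  assume "Q = P"
  then show ?thesis using assms unfolding path_nbrs_def by blast
next
  assume Q: "Q = rev P"
  define m where "m = length P - Suc (Suc k)"
  have "Suc m < length P" and "P ! m = Q ! Suc k" and "P ! Suc m = Q ! k"
    using assms(4) unfolding Q m_def by (simp_all add: rev_nth Suc_diff_Suc)
  then show ?thesis using assms(1,2) unfolding path_nbrs_def by blast
qed

lemma path_partition_exchange:
  assumes pp: "path_partition V E S" and PS: "P \<in> S" and RS: "R \<in> S" and "P \<noteq> R"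
    and gA: "gpath E A" and gB: "gpath E B"
    and un: "set A \<union> set B = set P \<union> set R" and dj: "set A \<inter> set B = {}"
  defines "S0 \<equiv> S - {P, R}"
  shows "path_partition V E (insert A (insert B S0))" and "card (insert A (insert B S0)) = card S"
    and "B \<notin> S0"
proof -
  have fin: "finite S" and gp: "\<forall>p\<in>S. gpath E p"
    and dis: "\<forall>p\<in>S. \<forall>q\<in>S. p \<noteq> q \<longrightarrow> set p \<inter> set q = {}" and cov: "\<Union>(set ` S) = V"
    using pp unfolding path_partition_def by blast+
  have away: "set q \<inter> set p = {}" if "q \<in> S0" and "p \<in> {A, B}" for p q
  proof -
    have "set q \<inter> (set P \<union> set R) = {}" using dis that(1) PS RS unfolding S0_def by blast
    then show ?thesis using that(2) un by blast
  qed
  have "set A \<noteq> {}" "set B \<noteq> {}" using gA gB unfolding gpath_def by auto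
  then have A0: "A \<notin> S0" and B0: "B \<notin> S0" and "A \<noteq> B"
    using away[of A A] away[of B B] dj by auto
  then show "B \<notin> S0" by blast
  show "path_partition V E (insert A (insert B S0))"
    unfolding path_partition_def
  proof (intro conjI ballI impI)
    show "finite (insert A (insert B S0))" using fin unfolding S0_def by simp
  next
    fix p assume "p \<in> insert A (insert B S0)"
    then show "gpath E p" using gp gA gB unfolding S0_def by blast
  next
    fix p q assume p: "p \<in> insert A (insert B S0)" and q: "q \<in> insert A (insert B S0)"
      and "p \<noteq> q"
    then consider "p \<in> {A, B}" "q \<in> {A, B}" | "p \<in> S0" "q \<in> {A, B}" | "p \<in> {A, B}" "q \<in> S0"
      | "p \<in> S0" "q \<in> S0" by blast
    then show "set p \<inter> set q = {}"
    proof cases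
      case 1 then show ?thesis using dj \<open>p \<noteq> q\<close> by blast
    next
      case 2 then show ?thesis using away by blast
    next
      case 3 then show ?thesis using away by blast
    next
      case 4 then show ?thesis using dis \<open>p \<noteq> q\<close> unfolding S0_def by blast
    qed
  next
    have "\<Union>(set ` S) = set P \<union> set R \<union> \<Union>(set ` S0)" using PS RS unfolding S0_def by blast
    then show "\<Union>(set ` insert A (insert B S0)) = V" using cov un by auto
  qed
  have PR: "{P, R} \<subseteq> S" using PS RS by blast
  then have "card S0 = card S - 2" using fin \<open>P \<noteq> R\<close> unfolding S0_def by (simp add: card_Diff_subset)
  moreover have "2 \<le> card S" using card_mono[OF fin PR] \<open>P \<noteq> R\<close> by simp
  ultimately show "card (insert A (insert B S0)) = card S"
    using A0 B0 \<open>A \<noteq> B\<close> fin unfolding S0_def by simp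
qed

lemma canonical_no_cycle_exchange:
  assumes can: "canonical V E S" and "P \<in> S" and "R \<in> S" and "P \<noteq> R"
    and "\<not> cycle_comp E P" and "\<not> cycle_comp E R"
    and "gpath E A" and "gpath E B"
    and "set A \<union> set B = set P \<union> set R" and "set A \<inter> set B = {}"
    and "cycle_comp E B"
  shows False
proof -
  have pp: "path_partition V E S"
    and cycles_max: "\<And>S'. path_partition V E S' \<Longrightarrow> card S' = card S \<Longrightarrow>
        card {p \<in> S'. cycle_comp E p} \<le> card {p \<in> S. cycle_comp E p}"
    using can by (simp_all add: canonical_def)
  define S' where "S' = insert A (insert B (S - {P, R}))"
  have pp': "path_partition V E S'" and "card S' = card S" and B_new: "B \<notin> S - {P, R}"
    using path_partition_exchange[OF pp assms(2-4,7-10)] unfolding S'_def by simp_all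
  define Cyc where "Cyc = {p \<in> S. cycle_comp E p}"
  define Cyc' where "Cyc' = {p \<in> S'. cycle_comp E p}"
  have "finite Cyc" "finite Cyc'"
    using pp pp' unfolding Cyc_def Cyc'_def path_partition_def by simp_all
  moreover have "insert B Cyc \<subseteq> Cyc'"
    using \<open>cycle_comp E B\<close> assms(5,6) unfolding Cyc_def Cyc'_def S'_def by blast
  moreover have "B \<notin> Cyc"
    using B_new assms(5,6) unfolding Cyc_def by blast
  ultimately have "Suc (card Cyc) \<le> card Cyc'"
    using card_mono card_insert_disjoint by metis
  moreover have "card Cyc' \<le> card Cyc"
    using cycles_max[OF pp' \<open>card S' = card S\<close>] unfolding Cyc_def Cyc'_def .
  ultimately show False by simp
qed

lemma heavy_goes_to_foreign_end:
  assumes "heavy V E S x"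
  obtains e where "goes_to V E S x e" and "e \<in> path_ends E S" and "e \<noteq> a" and "e \<noteq> b"
proof -
  define T where "T = {y. goes_to V E S x y \<and> y \<in> path_ends E S}"
  have "3 \<le> card T" using assms unfolding heavy_def T_def by blast
  moreover have "card {a, b} \<le> 2" by (simp add: card_insert_le_m1)
  ultimately have "\<not> T \<subseteq> {a, b}"
    using card_mono[of "{a, b}" T] by auto
  then show ?thesis using that unfolding T_def by blast
qed

text \<open>\<open>x\<^sub>2 \<noteq> o\<^sub>2\<close> as \<open>o\<^sub>2 \<in> V\<^sub>1\<close>, and they are not consecutive since a free edge never joins path
  neighbours.\<close>

lemma crossing_tail_long:
  assumes "P \<in> S" and "path_comp E P" and "Q = P \<or> Q = rev P" and "Suc i < length Q"
    and x2: "Q ! Suc i \<notin> V1 E S" and free: "free_edge E S (Q ! Suc i) (last Q)"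
  shows "Suc (Suc (Suc i)) < length Q"
proof -
  have "last Q = hd P \<or> last Q = last P"
    using assms(3,4) by (auto simp: last_rev)
  then have "last Q \<in> path_ends E S"
    using assms(1,2) unfolding path_ends_def by blast
  then have "last Q \<in> V1 E S" unfolding V1_def by (rule UnI1)
  moreover have last_nth: "last Q = Q ! (length Q - 1)"
    using assms(4) by (intro last_conv_nth) auto
  ultimately have long: "Suc (Suc i) < length Q"
    using x2 assms(4) by (metis Suc_lessI diff_Suc_1)
  show ?thesis
  proof (rule ccontr)
    assume "\<not> ?thesis"
    then have "length Q - 1 = Suc (Suc i)" using long by linarith
    then have "last Q = Q ! Suc (Suc i)" using last_nth by simp
    then show False
      using free path_nbrs_consecutive[OF assms(1-3) long] unfolding free_edge_def by simp
  qed
qed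

lemma not_heavy_before_crossing:
  assumes sg: "simple_graph V E" and can: "canonical V E S"
    and PS: "P \<in> S" and pc: "path_comp E P" and Q: "Q = P \<or> Q = rev P"
    and len: "Suc i < length Q" and x2: "Q ! Suc i \<in> V2 V E S"
    and g1: "goes_to V E S (Q ! i) (hd Q)" and g2: "goes_to V E S (Q ! Suc i) (last Q)"
    and j: "0 < j" "j < i"
  shows "\<not> heavy V E S (Q ! j)"
proof
  assume "heavy V E S (Q ! j)"
  then obtain e where ge: "goes_to V E S (Q ! j) e" and "e \<in> path_ends E S"
    and e_not_P: "e \<noteq> hd P" "e \<noteq> last P"
    by (rule heavy_goes_to_foreign_end)
  then obtain R where RS: "R \<in> S" and pcR: "path_comp E R" and eR: "e = hd R \<or> e = last R"
    unfolding path_ends_def by blast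
  have Ee: "E (Q ! j) e" using ge unfolding goes_to_def free_edge_def by blast
  have sym: "\<forall>u v. E u v \<longrightarrow> E v u" using sg unfolding simple_graph_def by blast
  have pp: "path_partition V E S" using can unfolding canonical_def by blast
  then have gp: "\<forall>p\<in>S. gpath E p" and dis: "\<forall>p\<in>S. \<forall>q\<in>S. p \<noteq> q \<longrightarrow> set p \<inter> set q = {}"
    unfolding path_partition_def by blast+
  have PR: "P \<noteq> R" using eR e_not_P by auto
  have sQ: "set Q = set P" using Q by auto
  moreover have "set P \<inter> set R = {}" using dis PS RS PR by blast
  ultimately have dPR: "set Q \<inter> set R = {}" by simp
  have "gpath E Q" using Q gp PS gpath_rev[OF sym] by blast
  then have dQ: "distinct Q" and scQ: "successively E Q"
    unfolding gpath_iff_successively by blast+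
  define R' where "R' = (if e = hd R then R else rev R)"
  have gR': "gpath E R'" using gp RS gpath_rev[OF sym] unfolding R'_def by simp
  have "R \<noteq> []" using gp RS unfolding gpath_def by blast
  then have hdR': "hd R' = e" and sR': "set R' = set R"
    using eR unfolding R'_def by (auto simp: hd_rev)
  have fe2: "free_edge E S (Q ! Suc i) (last Q)" using g2 unfolding goes_to_def by blast
  have long: "Suc (Suc (Suc i)) < length Q"
    using crossing_tail_long[OF PS pc Q len _ fe2] x2 unfolding V2_def by blast
  txt \<open>With \<open>v = Q ! j\<close>: \<open>X\<close> runs from the successor of \<open>v\<close> to \<open>x\<^sub>1\<close>, \<open>Y\<close> is \<open>o\<^sub>1 \<dots> v\<close>, and \<open>B\<close> is \<open>x\<^sub>2 \<dots> o\<^sub>2\<close>.\<close>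
  define C where "C = take (Suc i) Q"
  define X where "X = drop (Suc j) C"
  define Y where "Y = take (Suc j) C"
  define A where "A = X @ Y @ R'"
  define B where "B = drop (Suc i) Q"
  have X_ends: "X \<noteq> []" "last X = Q ! i"
    using j len unfolding X_def C_def by (simp_all add: last_conv_nth)
  have Y_ends: "Y \<noteq> []" "hd Y = hd Q" "last Y = Q ! j"
    using j len unfolding Y_def C_def by (cases Q, simp_all, subst last_conv_nth, auto)
  have CB: "C @ B = Q" and YX: "Y @ X = C"
    unfolding C_def B_def X_def Y_def by (rule append_take_drop_id)+
  have "distinct (C @ B)" using dQ CB by simp
  then have "distinct (Y @ X)" using YX by simp
  moreover have "set (Y @ X) \<inter> set R' = {}" using dPR sR' YX CB by auto
  ultimately have "distinct A" using gR' unfolding A_def gpath_def by auto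
  moreover have "successively E A"
  proof -
    have "successively E C" unfolding C_def by (rule successively_take[OF scQ])
    then have "successively E X" "successively E Y"
      unfolding X_def Y_def by (rule successively_drop, rule successively_take)
    moreover have "successively E R'" and "E (Q ! i) (hd Q)"
      using gR' g1 unfolding gpath_iff_successively goes_to_def free_edge_def by blast+
    ultimately show ?thesis
      using X_ends Y_ends hdR' Ee unfolding A_def by (simp add: successively_append_iff)
  qed
  ultimately have gA: "gpath E A" using X_ends unfolding gpath_iff_successively A_def by simp
  have gB: "gpath E B"
    using long dQ successively_drop[OF scQ] unfolding B_def gpath_iff_successively by simp
  have "E (last B) (hd B)"
    using fe2 sym long unfolding B_def free_edge_def by (simp add: hd_drop_conv_nth)
  then have cB: "cycle_comp E B"
    using gB long by (intro cycle_compI) (simp_all add: B_def)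
  have "set A = set C \<union> set R" using YX sR' unfolding A_def by auto
  moreover have "set C \<union> set B = set Q" "set C \<inter> set B = {}"
    using dQ by (simp_all flip: CB)
  ultimately have AB_un: "set A \<union> set B = set P \<union> set R" and AB_dj: "set A \<inter> set B = {}"
    using dPR sQ by auto
  have "\<not> cycle_comp E P" "\<not> cycle_comp E R"
    using pc pcR unfolding path_comp_def by simp_all
  from canonical_no_cycle_exchange[OF can PS RS PR this gA gB AB_un AB_dj cB] show False .
qed

theorem mainTheorem12:
  fixes V :: "'a set" and E :: "'a \<Rightarrow> 'a \<Rightarrow> bool" and S :: "'a list set"
    and P Q :: "'a list" and i :: nat
  assumes "simple_graph V E" and "regular 6 V E" and "canonical V E S"
    and "P \<in> S" and "path_comp E P"
    and "Q = P \<or> Q = rev P"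
    and "Suc i < length Q"
    and "Q ! i \<in> V2 V E S" and "Q ! Suc i \<in> V2 V E S"
    and "goes_to V E S (Q ! i) (hd Q)" and "goes_to V E S (Q ! Suc i) (last Q)"
  shows "(\<forall>j. 0 < j \<and> j < i \<longrightarrow> \<not> heavy V E S (Q ! j))
       \<and> (\<forall>j. Suc i < j \<and> j < length Q - 1 \<longrightarrow> \<not> heavy V E S (Q ! j))"
proof (intro conjI allI impI)
  fix j assume "0 < j \<and> j < i"
  then show "\<not> heavy V E S (Q ! j)"
    using not_heavy_before_crossing[OF assms(1,3-7,9-11)] by blast
next
  fix j assume j: "Suc i < j \<and> j < length Q - 1"
  define i' where "i' = length Q - Suc (Suc i)"
  have Q': "rev Q = P \<or> rev Q = rev P" using assms(6) by auto
  have "Suc i' < length (rev Q)" "rev Q ! i' = Q ! Suc i" "rev Q ! Suc i' = Q ! i"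
    "rev Q ! (length Q - Suc j) = Q ! j" "hd (rev Q) = last Q" "last (rev Q) = hd Q"
    using assms(7) j unfolding i'_def by (auto simp: rev_nth Suc_diff_Suc hd_rev last_rev)
  moreover have "0 < length Q - Suc j" "length Q - Suc j < i'"
    using j assms(7) unfolding i'_def by auto
  ultimately show "\<not> heavy V E S (Q ! j)"
    using not_heavy_before_crossing[OF assms(1,3-5) Q', of i' "length Q - Suc j"] assms(8,10,11)
    by simp
qed

end
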